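(* Let $G$ be a vigorous subgroup of $\operatorname{Homeo}(\mathfrak{C})$ generated by its elements of small support. Let $I,K\in K_{\mathfrak{C}}$ with $I\subsetneq K$. Then there exist $J\in K_{\mathfrak{C}}$ with $I\subsetneq J\subsetneq K$ and a group isomorphism $f:G\to\operatorname{pstab}_G(\mathfrak{C}\setminus J)$ such that for every $\gamma\in G$ the homeomorphism $\gamma f$ agrees with $\gamma$ on $I\gamma^{-1}\cap I$.
   Context: $\mathfrak{C}$ denotes a Cantor space (a space homeomorphic to $\{0,1\}^\omega$). Groups of homeomorphisms act on the right, and products are composed left to right. $K_{\mathfrak{C}}$ denotes the set of non-empty proper clopen subsets of $\mathfrak{C}$. For $\gamma\in\operatorname{Homeo}(\mathfrak{C})$, $\operatorname{supp}(\gamma)=\{p\in\mathfrak{C}: p\gamma\neq p\}$. For $G\le\operatorname{Homeo}(\mathfrak{C})$ and $A\subseteq\mathfrak{C}$, $\operatorname{pstab}_G(A)=\{g\in G: pg=p \text{ for all } p\in A\}$. A subset $S\subseteq \operatorname{Homeo}(\mathfrak{C})$ is vigorous if for all clopen $A,B,C\subseteq\mathfrak{C}$ with $B,C$ non-empty proper subsets of $A$ there is $\gamma\in S$ with $\operatorname{supp}(\gamma)\subseteq A$ and $B\gamma\subseteq C$. $G$ is generated by its elements of small support if $G$ is generated by $\{\gamma\in G: \operatorname{supp}(\gamma)\subseteq A \text{ for some } A\in K_{\mathfrak{C}}\}$. *)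

theory Defs
  imports "HOL-Analysis.Analysis"
begin

type_synonym cantor = "nat \<Rightarrow> bool"

definition cantor_top :: "cantor topology" where
  "cantor_top = product_topology (\<lambda>_. discrete_topology (UNIV :: bool set)) UNIV"

definition clopen_C :: "cantor set \<Rightarrow> bool" where
  "clopen_C A \<longleftrightarrow> openin cantor_top A \<and> closedin cantor_top A"

definition K_C :: "cantor set set" where
  "K_C = {A. clopen_C A \<and> A \<noteq> {} \<and> A \<noteq> UNIV}"

definition Homeo_C :: "(cantor \<Rightarrow> cantor) set" where
  "Homeo_C = {g. homeomorphic_map cantor_top cantor_top g}"

text \<open>Right actions: p\<gamma> is written \<gamma> p; the product \<gamma>\<delta> (first \<gamma>, then \<delta>)
is the function \<delta> \<circ> \<gamma>; the inverse is inv \<gamma>.\<close>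

definition supp :: "(cantor \<Rightarrow> cantor) \<Rightarrow> cantor set" where
  "supp g = {p. g p \<noteq> p}"

definition homeo_subgroup :: "(cantor \<Rightarrow> cantor) set \<Rightarrow> bool" where
  "homeo_subgroup G \<longleftrightarrow> G \<subseteq> Homeo_C \<and> id \<in> G \<and>
     (\<forall>g\<in>G. \<forall>h\<in>G. h \<circ> g \<in> G) \<and> (\<forall>g\<in>G. inv g \<in> G)"

definition pstab :: "(cantor \<Rightarrow> cantor) set \<Rightarrow> cantor set \<Rightarrow> (cantor \<Rightarrow> cantor) set" where
  "pstab G A = {g\<in>G. \<forall>p\<in>A. g p = p}"

definition vigorous :: "(cantor \<Rightarrow> cantor) set \<Rightarrow> bool" where
  "vigorous S \<longleftrightarrow> (\<forall>A B C. clopen_C A \<and> clopen_C B \<and> clopen_C C \<and>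
     B \<noteq> {} \<and> B \<subset> A \<and> C \<noteq> {} \<and> C \<subset> A \<longrightarrow>
     (\<exists>g\<in>S. supp g \<subseteq> A \<and> g ` B \<subseteq> C))"

definition generated_homeo :: "(cantor \<Rightarrow> cantor) set \<Rightarrow> (cantor \<Rightarrow> cantor) set" where
  "generated_homeo S = \<Inter>{H. homeo_subgroup H \<and> S \<subseteq> H}"

definition small_support_elems :: "(cantor \<Rightarrow> cantor) set \<Rightarrow> (cantor \<Rightarrow> cantor) set" where
  "small_support_elems G = {g\<in>G. \<exists>A\<in>K_C. supp g \<subseteq> A}"

definition gen_by_small_support :: "(cantor \<Rightarrow> cantor) set \<Rightarrow> bool" where
  "gen_by_small_support G \<longleftrightarrow> G = generated_homeo (small_support_elems G)"

definition group_iso_on ::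
  "((cantor \<Rightarrow> cantor) \<Rightarrow> (cantor \<Rightarrow> cantor)) \<Rightarrow> (cantor \<Rightarrow> cantor) set \<Rightarrow> (cantor \<Rightarrow> cantor) set \<Rightarrow> bool" where
  "group_iso_on f G H \<longleftrightarrow> bij_betw f G H \<and> (\<forall>g\<in>G. \<forall>h\<in>G. f (h \<circ> g) = f h \<circ> f g)"

end

theory Submission
  imports Defs
begin

text \<open>Pick a non-empty clopen I1 \<subset> I and, by vigour, g \<in> G supported in I1 \<union> (C - I) that maps
  C - I into a proper clopen part of K - I. The map \<phi> that is the identity on I and g elsewhere is a
  bijection of C onto J = I \<union> (C - I)g, and f transports \<gamma> along \<phi> (identity outside J). So f fixes
  the elements supported in I and is conjugation by g on those supported off I1. A subgroup containing
  both kinds contains every element of G supported in a clopen X \<supseteq> I that fixes some non-empty clopen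
  part of X, since conjugating by such a subgroup element pushes I1 into the fixed part. With X = C
  this covers the elements of small support, so f maps G into G; with X = J, together with writing
  an element supported in J as a product of two such elements, it shows that f is onto
  pstab(C - J).\<close>

lemma topspace_cantor_top [simp]: "topspace cantor_top = UNIV"
  by (simp add: cantor_top_def)

lemma clopen_C_UNIV: "clopen_C UNIV"
  unfolding clopen_C_def by (metis topspace_cantor_top closedin_topspace openin_topspace)

lemma clopen_C_Int: "clopen_C A \<Longrightarrow> clopen_C B \<Longrightarrow> clopen_C (A \<inter> B)"
  unfolding clopen_C_def by auto

lemma clopen_C_Un: "clopen_C A \<Longrightarrow> clopen_C B \<Longrightarrow> clopen_C (A \<union> B)"
  unfolding clopen_C_def by auto

lemma clopen_C_Diff: "clopen_C A \<Longrightarrow> clopen_C B \<Longrightarrow> clopen_C (A - B)"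
  unfolding clopen_C_def by auto

lemma clopen_C_coordinate: "clopen_C {q. q n = b}"
proof -
  have c: "continuous_map cantor_top (discrete_topology UNIV) (\<lambda>q. q n)"
    unfolding cantor_top_def by (rule continuous_map_product_projection) simp
  have "{q. q n = b} = {q \<in> topspace cantor_top. q n \<in> {b}}"
    by simp
  then show ?thesis
    unfolding clopen_C_def
    using openin_continuous_map_preimage[OF c, of "{b}"] closedin_continuous_map_preimage[OF c, of "{b}"]
    by simp
qed

text \<open>A non-empty open set contains a cylinder around one of its points; the cylinder leaves some
  coordinate n free, so fixing n splits off a proper non-empty clopen part.\<close>
lemma clopen_C_proper_subset:
  assumes "clopen_C X" "X \<noteq> {}"
  obtains Y where "clopen_C Y" "Y \<noteq> {}" "Y \<subset> X"
proof -
  obtain p where p: "p \<in> X" using assms(2) by auto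
  have "openin cantor_top X" using assms(1) unfolding clopen_C_def by auto
  then obtain U where U: "finite {i. U i \<noteq> UNIV}" "p \<in> Pi\<^sub>E UNIV U" "Pi\<^sub>E UNIV U \<subseteq> X"
    unfolding cantor_top_def openin_product_topology_alt using p by auto
  obtain n where "n \<notin> {i. U i \<noteq> UNIV}"
    using ex_new_if_finite[OF infinite_UNIV_nat U(1)] ..
  then have "p(n := \<not> p n) \<in> X" using U(2,3) by (auto simp: PiE_def Pi_def)
  define Y where "Y = X \<inter> {q. q n = p n}"
  have "p(n := \<not> p n) \<notin> Y" "p \<in> Y" "Y \<subseteq> X"
    using p unfolding Y_def by auto
  then have "Y \<subset> X" "Y \<noteq> {}"
    using \<open>p(n := \<not> p n) \<in> X\<close> by blast+
  moreover have "clopen_C Y"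
    unfolding Y_def by (rule clopen_C_Int[OF assms(1) clopen_C_coordinate])
  ultimately show ?thesis
    using that by blast
qed

lemma Homeo_C_bij: "g \<in> Homeo_C \<Longrightarrow> bij g"
  unfolding Homeo_C_def bij_def
  using homeomorphic_imp_surjective_map homeomorphic_imp_injective_map by fastforce

lemma Homeo_C_clopen_image: "g \<in> Homeo_C \<Longrightarrow> clopen_C A \<Longrightarrow> clopen_C (g ` A)"
  unfolding Homeo_C_def clopen_C_def
  by (metis homeomorphic_map_closedness_eq homeomorphic_map_openness_eq mem_Collect_eq)

lemma homeo_subgroup_id: "homeo_subgroup G \<Longrightarrow> id \<in> G"
  unfolding homeo_subgroup_def by auto

lemma homeo_subgroup_comp: "homeo_subgroup G \<Longrightarrow> a \<in> G \<Longrightarrow> b \<in> G \<Longrightarrow> a \<circ> b \<in> G"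
  unfolding homeo_subgroup_def by auto

lemma homeo_subgroup_inv: "homeo_subgroup G \<Longrightarrow> g \<in> G \<Longrightarrow> inv g \<in> G"
  unfolding homeo_subgroup_def by auto

lemma homeo_subgroup_Homeo_C: "homeo_subgroup G \<Longrightarrow> g \<in> G \<Longrightarrow> g \<in> Homeo_C"
  unfolding homeo_subgroup_def by auto

lemma homeo_subgroup_bij: "homeo_subgroup G \<Longrightarrow> g \<in> G \<Longrightarrow> bij g"
  by (simp add: Homeo_C_bij homeo_subgroup_Homeo_C)

lemma supp_subset_iff: "supp g \<subseteq> A \<longleftrightarrow> (\<forall>p. p \<notin> A \<longrightarrow> g p = p)"
  by (auto simp: supp_def)

lemma supp_id [simp]: "supp id = {}"
  by (simp add: supp_def)

lemma supp_comp: "supp (g \<circ> h) \<subseteq> supp g \<union> supp h"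
  by (auto simp: supp_def)

lemma supp_inv: "bij g \<Longrightarrow> supp (inv g) = supp g"
  by (auto simp: supp_def) (metis bij_inv_eq_iff)+

lemma supp_conj: "bij h \<Longrightarrow> supp (h \<circ> x \<circ> inv h) = h ` supp x"
  by (auto simp: supp_def image_iff bij_is_inj inj_eq) (metis bij_inv_eq_iff)

lemma image_subset_of_supp: "inj g \<Longrightarrow> supp g \<subseteq> A \<Longrightarrow> g ` A \<subseteq> A"
  unfolding supp_subset_iff by (metis image_subsetI inj_eq)

lemma pstab_Diff_UNIV: "pstab G (UNIV - A) = {g\<in>G. supp g \<subseteq> A}"
  by (auto simp: pstab_def supp_def)

locale vigorous_homeo_group =
  fixes G :: "(cantor \<Rightarrow> cantor) set"
  assumes subgroup: "homeo_subgroup G" and vigorous: "vigorous G"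
begin

lemma vigorousE:
  assumes "clopen_C A" "clopen_C B" "clopen_C C" "B \<noteq> {}" "B \<subset> A" "C \<noteq> {}" "C \<subset> A"
  obtains g where "g \<in> G" "supp g \<subseteq> A" "g ` B \<subseteq> C"
proof -
  have "\<exists>g\<in>G. supp g \<subseteq> A \<and> g ` B \<subseteq> C"
    using vigorous assms unfolding vigorous_def by blast
  then show ?thesis
    using that by blast
qed

lemma subgroup_moves_clopen_into:
  assumes R: "homeo_subgroup R" "R \<subseteq> G"
    and R_I: "\<forall>x\<in>G. supp x \<subseteq> I \<longrightarrow> x \<in> R" and R_X: "\<forall>x\<in>G. supp x \<subseteq> X - I1 \<longrightarrow> x \<in> R"
    and X: "clopen_C X" and I: "clopen_C I" "I \<subseteq> X" "I \<noteq> X"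
    and I1: "clopen_C I1" "I1 \<noteq> {}" "I1 \<subset> I"
    and Z: "clopen_C Z" "Z \<noteq> {}" "Z \<subseteq> X"
  obtains y where "y \<in> R" "supp y \<subseteq> X" "y ` I1 \<subseteq> Z"
proof -
  have D: "clopen_C (I - I1)" "I - I1 \<noteq> {}" "I - I1 \<subset> I"
    using clopen_C_Diff[OF I(1) I1(1)] I1(2,3) by auto
  consider (disjoint) "Z \<inter> I = {}" | (covers) "I \<subseteq> Z" | (meets) "Z \<inter> I \<noteq> {}" "\<not> I \<subseteq> Z"
    by blast
  then show ?thesis
  proof cases
    case disjoint
    obtain y1 where y1: "y1 \<in> G" "supp y1 \<subseteq> I" "y1 ` I1 \<subseteq> I - I1"
      using vigorousE[OF I(1) I1(1) D(1) I1(2,3) D(2,3)] .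
    have "I - I1 \<subset> X - I1" "Z \<subset> X - I1"
      using I(2,3) I1(3) Z(3) D(2) disjoint by blast+
    then obtain y2 where y2: "y2 \<in> G" "supp y2 \<subseteq> X - I1" "y2 ` (I - I1) \<subseteq> Z"
      using vigorousE[OF clopen_C_Diff[OF X I1(1)] D(1) Z(1) D(2) _ Z(2)] by blast
    have "y1 \<in> R" "y2 \<in> R"
      using R_I R_X y1(1,2) y2(1,2) by blast+
    then have "y2 \<circ> y1 \<in> R"
      using homeo_subgroup_comp[OF R(1)] by blast
    moreover have "supp (y2 \<circ> y1) \<subseteq> X"
      using supp_comp[of y2 y1] y1(2) y2(2) I(2) by blast
    moreover have "(y2 \<circ> y1) ` I1 \<subseteq> Z"
      using y1(3) y2(3) by (auto simp: image_subset_iff)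
    ultimately show ?thesis
      by (rule that)
  next
    case covers
    then show ?thesis
      using that[of id] homeo_subgroup_id[OF R(1)] I1(3) by auto
  next
    case meets
    then have "Z \<inter> I \<subset> I" by blast
    then obtain y where "y \<in> G" "supp y \<subseteq> I" "y ` I1 \<subseteq> Z \<inter> I"
      using vigorousE[OF I(1) I1(1) clopen_C_Int[OF Z(1) I(1)] I1(2,3) meets(1)] by blast
    then show ?thesis
      using that R_I I(2) by (meson Int_subset_iff order_trans)
  qed
qed

text \<open>Conjugating x by an element of R that moves I1 into the fixed set Z yields an element
  supported in X - I1.\<close>
lemma subgroup_contains_supported_with_gap:
  assumes R: "homeo_subgroup R" "R \<subseteq> G"
    and R_I: "\<forall>x\<in>G. supp x \<subseteq> I \<longrightarrow> x \<in> R" and R_X: "\<forall>x\<in>G. supp x \<subseteq> X - I1 \<longrightarrow> x \<in> R"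
    and X: "clopen_C X" and I: "clopen_C I" "I \<subseteq> X" "I \<noteq> X"
    and I1: "clopen_C I1" "I1 \<noteq> {}" "I1 \<subset> I"
    and Z: "clopen_C Z" "Z \<noteq> {}" "Z \<subseteq> X"
    and x: "x \<in> G" "supp x \<subseteq> X - Z"
  shows "x \<in> R"
proof -
  obtain y where y: "y \<in> R" "supp y \<subseteq> X" "y ` I1 \<subseteq> Z"
    using subgroup_moves_clopen_into[OF assms(1-14)] .
  have "y \<in> G" using y(1) R(2) by blast
  then have bij_y: "bij y" using homeo_subgroup_bij[OF subgroup] by blast
  define x' where "x' = inv y \<circ> x \<circ> inv (inv y)"
  have "x' \<in> G"
    unfolding x'_def using \<open>y \<in> G\<close> x(1) subgroup
    by (simp add: homeo_subgroup_comp homeo_subgroup_inv)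
  have "inv y ` X \<subseteq> X"
    using image_subset_of_supp[of "inv y" X] y(2) bij_y
    by (simp add: supp_inv bij_is_inj bij_imp_bij_inv)
  have "inv y q \<notin> I1" if "q \<notin> Z" for q
    using that y(3) bij_y by (metis bij_inv_eq_iff image_subset_iff)
  then have "inv y ` supp x \<subseteq> X - I1"
    using x(2) \<open>inv y ` X \<subseteq> X\<close> by blast
  then have "supp x' \<subseteq> X - I1"
    unfolding x'_def supp_conj[OF bij_imp_bij_inv[OF bij_y]] .
  then have "x' \<in> R" using R_X \<open>x' \<in> G\<close> by blast
  moreover have "x = y \<circ> x' \<circ> inv y"
    unfolding x'_def
    by (rule ext) (simp add: inv_inv_eq[OF bij_y] surj_f_inv_f[OF bij_is_surj[OF bij_y]])
  ultimately show ?thesis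
    using y(1) homeo_subgroup_comp[OF R(1)] homeo_subgroup_inv[OF R(1)] by simp
qed

end

lemma clopen_C_image_not_covering:
  assumes J: "clopen_C J" "J \<noteq> {}" and \<delta>: "inj \<delta>" "\<delta> ` J \<subseteq> J"
  obtains Y where "clopen_C Y" "Y \<noteq> {}" "Y \<subseteq> J" "Y \<union> \<delta> ` Y \<noteq> J"
proof -
  obtain Y1 where Y1: "clopen_C Y1" "Y1 \<noteq> {}" "Y1 \<subset> J"
    using clopen_C_proper_subset[OF J] .
  have "clopen_C (J - Y1)" "J - Y1 \<noteq> {}"
    using clopen_C_Diff[OF J(1) Y1(1)] Y1(3) by auto
  then obtain Y2 where Y2: "clopen_C Y2" "Y2 \<noteq> {}" "Y2 \<subset> J - Y1"
    using clopen_C_proper_subset by blast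
  show ?thesis
  proof (cases "Y1 \<union> \<delta> ` Y1 = J")
    case False
    then show ?thesis using that Y1 by blast
  next
    case True
    have "\<delta> ` Y2 \<inter> \<delta> ` Y1 = {}"
      using Y2(3) image_Int[OF \<delta>(1), of Y2 Y1] by auto
    then have "\<delta> ` Y2 \<subseteq> Y1"
      using True \<delta>(2) Y2(3) by blast
    then have "Y2 \<union> \<delta> ` Y2 \<noteq> J"
      using Y2(3) by blast
    then show ?thesis using that Y2 by blast
  qed
qed

context vigorous_homeo_group
begin

text \<open>Conjugate \<delta> by some c that fixes W and squeezes J - W into a proper clopen part T of it.\<close>
lemma exists_agreeing_with_gap:
  assumes \<delta>: "\<delta> \<in> G" "supp \<delta> \<subseteq> J" and J: "clopen_C J" "J \<noteq> UNIV"
    and W: "clopen_C W" "W \<subseteq> J" "W \<noteq> J"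
  obtains u Z where "u \<in> G" "clopen_C Z" "Z \<noteq> {}" "Z \<subseteq> J" "supp u \<subseteq> J - Z"
    "\<And>y. y \<in> W \<Longrightarrow> \<delta> y \<in> W \<Longrightarrow> u y = \<delta> y"
proof -
  have JW: "clopen_C (J - W)" "J - W \<noteq> {}"
    using clopen_C_Diff[OF J(1) W(1)] W(2,3) by auto
  obtain T where T: "clopen_C T" "T \<noteq> {}" "T \<subset> J - W"
    using clopen_C_proper_subset[OF JW] .
  have "J - W \<subset> UNIV - W" "T \<subset> UNIV - W"
    using J(2) T(3) W(2) by blast+
  then obtain c where c: "c \<in> G" "supp c \<subseteq> UNIV - W" "c ` (J - W) \<subseteq> T"
    using vigorousE[OF clopen_C_Diff[OF clopen_C_UNIV W(1)] JW(1) T(1) JW(2) _ T(2)] by blast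
  have bij_c: "bij c" using homeo_subgroup_bij[OF subgroup c(1)] .
  have c_W: "c y = y" if "y \<in> W" for y
    using c(2) that unfolding supp_subset_iff by blast
  define u where "u = c \<circ> \<delta> \<circ> inv c"
  have "u \<in> G"
    unfolding u_def using subgroup c(1) \<delta>(1) by (simp add: homeo_subgroup_comp homeo_subgroup_inv)
  have "supp u \<subseteq> c ` J"
    unfolding u_def supp_conj[OF bij_c] using \<delta>(2) by blast
  also have "\<dots> \<subseteq> W \<union> T"
    using c(3) c_W by force
  finally have "supp u \<subseteq> J - (J - W - T)"
    using T(3) W(2) by blast
  moreover have "clopen_C (J - W - T)" "J - W - T \<noteq> {}"
    using clopen_C_Diff[OF JW(1) T(1)] T(3) by auto
  moreover have "u y = \<delta> y" if "y \<in> W" "\<delta> y \<in> W" for y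
  proof -
    have "inv c y = y"
      using c_W[OF that(1)] bij_c by (metis bij_inv_eq_iff)
    then show ?thesis
      unfolding u_def using c_W[OF that(2)] by simp
  qed
  ultimately show ?thesis
    using that \<open>u \<in> G\<close> by blast
qed

text \<open>Fragmentation: \<delta> = u v, where u agrees with \<delta> on a clopen Y with Y \<union> Y\<delta> \<noteq> J
  (previous lemma with W = Y \<union> Y\<delta>), so that v fixes Y.\<close>
lemma subgroup_contains_supported:
  assumes R: "homeo_subgroup R" and J: "clopen_C J" "J \<noteq> {}" "J \<noteq> UNIV"
    and R_gap: "\<And>x Z. x \<in> G \<Longrightarrow> clopen_C Z \<Longrightarrow> Z \<noteq> {} \<Longrightarrow> Z \<subseteq> J \<Longrightarrow> supp x \<subseteq> J - Z \<Longrightarrow> x \<in> R"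
    and \<delta>: "\<delta> \<in> G" "supp \<delta> \<subseteq> J"
  shows "\<delta> \<in> R"
proof -
  have bij_\<delta>: "bij \<delta>" using homeo_subgroup_bij[OF subgroup \<delta>(1)] .
  have "\<delta> ` J \<subseteq> J"
    using image_subset_of_supp[OF bij_is_inj[OF bij_\<delta>] \<delta>(2)] .
  then obtain Y where Y: "clopen_C Y" "Y \<noteq> {}" "Y \<subseteq> J" "Y \<union> \<delta> ` Y \<noteq> J"
    using clopen_C_image_not_covering[OF J(1,2) bij_is_inj[OF bij_\<delta>]] by blast
  have W: "clopen_C (Y \<union> \<delta> ` Y)" "Y \<union> \<delta> ` Y \<subseteq> J"
    using Y(3) \<open>\<delta> ` J \<subseteq> J\<close>
      clopen_C_Un[OF Y(1) Homeo_C_clopen_image[OF homeo_subgroup_Homeo_C[OF subgroup \<delta>(1)] Y(1)]]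
    by blast+
  obtain u Z where u: "u \<in> G" "clopen_C Z" "Z \<noteq> {}" "Z \<subseteq> J" "supp u \<subseteq> J - Z"
    and u_W: "\<And>y. y \<in> Y \<union> \<delta> ` Y \<Longrightarrow> \<delta> y \<in> Y \<union> \<delta> ` Y \<Longrightarrow> u y = \<delta> y"
    using exists_agreeing_with_gap[OF \<delta> J(1,3) W Y(4)] by blast
  have u_\<delta>: "u y = \<delta> y" if "y \<in> Y" for y
    using u_W that by blast
  have bij_u: "bij u" using homeo_subgroup_bij[OF subgroup u(1)] .
  define v where "v = inv u \<circ> \<delta>"
  have "v \<in> G"
    unfolding v_def using subgroup u(1) \<delta>(1) by (simp add: homeo_subgroup_comp homeo_subgroup_inv)
  have "supp v \<subseteq> J"
    using supp_comp[of "inv u" \<delta>] supp_inv[OF bij_u] u(5) \<delta>(2) unfolding v_def by blast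
  moreover have "v y = y" if "y \<in> Y" for y
    using u_\<delta>[OF that] bij_u unfolding v_def by (metis bij_inv_eq_iff comp_apply)
  ultimately have "supp v \<subseteq> J - Y"
    unfolding supp_subset_iff by blast
  then have "v \<in> R"
    using R_gap[OF \<open>v \<in> G\<close> Y(1-3)] by blast
  moreover have "u \<in> R"
    using R_gap[OF u] .
  moreover have "\<delta> = u \<circ> v"
    unfolding v_def by (rule ext) (simp add: surj_f_inv_f[OF bij_is_surj[OF bij_u]])
  ultimately show ?thesis
    using homeo_subgroup_comp[OF R] by simp
qed

end

definition transport :: "('a \<Rightarrow> 'a) \<Rightarrow> 'a set \<Rightarrow> ('a \<Rightarrow> 'a) \<Rightarrow> 'a \<Rightarrow> 'a" where
  "transport \<phi> J \<gamma> = (\<lambda>p. if p \<in> J then \<phi> (\<gamma> (inv \<phi> p)) else p)"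

context
  fixes \<phi> :: "'a \<Rightarrow> 'a" and J :: "'a set"
  assumes \<phi>: "bij_betw \<phi> UNIV J"
begin

lemma transport_apply: "transport \<phi> J \<gamma> (\<phi> x) = \<phi> (\<gamma> x)"
proof -
  have "\<phi> x \<in> J" "inv \<phi> (\<phi> x) = x"
    using \<phi> by (auto simp: bij_betw_def)
  then show ?thesis
    by (simp add: transport_def)
qed

lemma transport_outside: "p \<notin> J \<Longrightarrow> transport \<phi> J \<gamma> p = p"
  by (simp add: transport_def)

lemma transport_cases:
  obtains x where "p = \<phi> x" | "p \<notin> J"
  using \<phi> by (metis bij_betw_imp_surj_on imageE)

lemma transport_comp: "transport \<phi> J (a \<circ> b) = transport \<phi> J a \<circ> transport \<phi> J b"
proof
  fix p
  show "transport \<phi> J (a \<circ> b) p = (transport \<phi> J a \<circ> transport \<phi> J b) p"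
    by (cases p rule: transport_cases) (simp_all add: transport_apply transport_outside)
qed

lemma transport_id: "transport \<phi> J id = id"
proof
  fix p
  show "transport \<phi> J id p = id p"
    by (cases p rule: transport_cases) (simp_all add: transport_apply transport_outside)
qed

lemma transport_inv:
  assumes "bij a"
  shows "transport \<phi> J (inv a) = inv (transport \<phi> J a)"
proof (rule inv_unique_comp[symmetric])
  show "transport \<phi> J a \<circ> transport \<phi> J (inv a) = id"
    using surj_iff[THEN iffD1, OF bij_is_surj[OF assms]] by (simp add: transport_id flip: transport_comp)
  show "transport \<phi> J (inv a) \<circ> transport \<phi> J a = id"
    using inj_iff[THEN iffD1, OF bij_is_inj[OF assms]] by (simp add: transport_id flip: transport_comp)
qed

lemma inj_transport: "inj (transport \<phi> J)"
proof (rule injI)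
  fix a b assume "transport \<phi> J a = transport \<phi> J b"
  then have "\<phi> (a x) = \<phi> (b x)" for x
    by (metis transport_apply)
  then show "a = b"
    using \<phi> by (auto simp: bij_betw_def inj_eq)
qed

end

lemma homeo_subgroup_transport_preimage:
  assumes \<phi>: "bij_betw \<phi> UNIV J" and G: "homeo_subgroup G"
  shows "homeo_subgroup {x\<in>G. transport \<phi> J x \<in> G}"
  using G homeo_subgroup_bij[OF G]
  unfolding homeo_subgroup_def
  by (auto simp: transport_comp[OF \<phi>] transport_id[OF \<phi>] transport_inv[OF \<phi>])

lemma homeo_subgroup_transport_image:
  assumes \<phi>: "bij_betw \<phi> UNIV J" and G: "homeo_subgroup G" and into: "transport \<phi> J ` G \<subseteq> G"
  shows "homeo_subgroup (transport \<phi> J ` G)"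
  unfolding homeo_subgroup_def
proof (intro conjI ballI)
  show "transport \<phi> J ` G \<subseteq> Homeo_C"
    using into G unfolding homeo_subgroup_def by blast
  show "id \<in> transport \<phi> J ` G"
    using homeo_subgroup_id[OF G] transport_id[OF \<phi>] by (metis image_eqI)
next
  fix a b assume "a \<in> transport \<phi> J ` G" "b \<in> transport \<phi> J ` G"
  then show "b \<circ> a \<in> transport \<phi> J ` G"
    using homeo_subgroup_comp[OF G] by (auto simp flip: transport_comp[OF \<phi>])
next
  fix a assume "a \<in> transport \<phi> J ` G"
  then show "inv a \<in> transport \<phi> J ` G"
    using homeo_subgroup_inv[OF G] homeo_subgroup_bij[OF G]
    by (auto simp flip: transport_inv[OF \<phi>])
qed

lemma supp_transport: "supp (transport \<phi> J \<gamma>) \<subseteq> J"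
  by (auto simp: supp_def transport_def)

lemma transport_eq_conj:
  assumes \<phi>: "bij_betw \<phi> UNIV J" and h: "bij h" "\<And>x. x \<in> A \<Longrightarrow> h x = \<phi> x"
    and \<gamma>: "inj \<gamma>" "supp \<gamma> \<subseteq> A"
  shows "transport \<phi> J \<gamma> = h \<circ> \<gamma> \<circ> inv h"
proof -
  have \<gamma>_A: "\<gamma> x \<in> A" if "x \<in> A" for x
    using image_subset_of_supp[OF \<gamma>] that by blast
  have \<gamma>_fix: "\<gamma> x = x" if "x \<notin> A" for x
    using \<gamma>(2) that unfolding supp_subset_iff by blast
  have conj: "transport \<phi> J \<gamma> (h x) = h (\<gamma> x)" for x
  proof (cases "x \<in> A")
    case True
    then show ?thesis
      using h(2) \<gamma>_A by (simp add: transport_apply[OF \<phi>])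
  next
    case False
    show ?thesis
    proof (cases "h x" rule: transport_cases[OF \<phi>])
      case (1 a)
      then have "a \<notin> A"
        using False h by (metis bij_is_inj inj_eq)
      then show ?thesis
        using 1 False \<gamma>_fix by (simp add: transport_apply[OF \<phi>])
    next
      case 2
      then show ?thesis
        using False \<gamma>_fix by (simp add: transport_outside[OF \<phi>])
    qed
  qed
  have "transport \<phi> J \<gamma> \<circ> h = h \<circ> \<gamma>"
    by (rule ext) (simp add: conj)
  then show ?thesis
    using h(1) by (metis bij_is_surj comp_id o_assoc surj_iff)
qed

lemma bij_betw_splice:
  assumes g: "bij g" "g ` (UNIV - I) \<inter> I = {}"
  shows "bij_betw (\<lambda>x. if x \<in> I then x else g x) UNIV (I \<union> g ` (UNIV - I))"
  unfolding bij_betw_def inj_def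
  using g by (auto simp: bij_is_inj inj_eq image_iff)

locale splice_embedding = vigorous_homeo_group +
  fixes I I1 J :: "cantor set" and g \<phi> :: "cantor \<Rightarrow> cantor"
  assumes I: "clopen_C I" "I \<noteq> UNIV"
    and I1: "clopen_C I1" "I1 \<noteq> {}" "I1 \<subset> I"
    and J: "clopen_C J" "I \<subset> J" "J \<noteq> UNIV"
    and g: "g \<in> G"
    and \<phi>: "bij_betw \<phi> UNIV J"
    and \<phi>_on_I: "\<And>x. x \<in> I \<Longrightarrow> \<phi> x = x"
    and \<phi>_off_I1: "\<And>x. x \<notin> I1 \<Longrightarrow> \<phi> x = g x"
begin

lemma transport_supported_in_I: "x \<in> G \<Longrightarrow> supp x \<subseteq> I \<Longrightarrow> transport \<phi> J x = x"
  using transport_eq_conj[OF \<phi> bij_id, of I x] \<phi>_on_I homeo_subgroup_bij[OF subgroup]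
  by (simp add: bij_is_inj)

lemma transport_supported_off_I1:
  "x \<in> G \<Longrightarrow> supp x \<subseteq> UNIV - I1 \<Longrightarrow> transport \<phi> J x = g \<circ> x \<circ> inv g"
  using transport_eq_conj[OF \<phi> homeo_subgroup_bij[OF subgroup g], of "UNIV - I1" x] \<phi>_off_I1
    homeo_subgroup_bij[OF subgroup]
  by (simp add: bij_is_inj)

lemma transport_agrees_on_I: "p \<in> I \<Longrightarrow> \<gamma> p \<in> I \<Longrightarrow> transport \<phi> J \<gamma> p = \<gamma> p"
  using transport_apply[OF \<phi>, of \<gamma> p] \<phi>_on_I by simp

lemma Diff_I1_subset_image: "J - I1 \<subseteq> g ` (UNIV - I1)"
proof
  fix p assume p: "p \<in> J - I1"
  then obtain x where "p = \<phi> x"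
    using \<phi> by (metis DiffD1 bij_betw_imp_surj_on imageE)
  moreover have "x \<notin> I1"
    using p I1(3) \<phi>_on_I calculation by auto
  ultimately show "p \<in> g ` (UNIV - I1)"
    using \<phi>_off_I1 by auto
qed

lemma transport_into:
  assumes "gen_by_small_support G"
  shows "transport \<phi> J ` G \<subseteq> G"
proof -
  define S where "S = {x\<in>G. transport \<phi> J x \<in> G}"
  have S: "homeo_subgroup S" "S \<subseteq> G"
    unfolding S_def using homeo_subgroup_transport_preimage[OF \<phi> subgroup] by auto
  have S_I: "\<forall>x\<in>G. supp x \<subseteq> I \<longrightarrow> x \<in> S"
    using transport_supported_in_I by (simp add: S_def)
  have S_off: "\<forall>x\<in>G. supp x \<subseteq> UNIV - I1 \<longrightarrow> x \<in> S"
    using transport_supported_off_I1 g subgroup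
    by (simp add: S_def homeo_subgroup_comp homeo_subgroup_inv)
  have "small_support_elems G \<subseteq> S"
  proof
    fix x assume "x \<in> small_support_elems G"
    then obtain A where x: "x \<in> G" "A \<in> K_C" "supp x \<subseteq> A"
      unfolding small_support_elems_def by blast
    then have "clopen_C (UNIV - A)" "UNIV - A \<noteq> {}" "supp x \<subseteq> UNIV - (UNIV - A)"
      by (auto simp: K_C_def clopen_C_Diff clopen_C_UNIV)
    then show "x \<in> S"
      using subgroup_contains_supported_with_gap[OF S S_I S_off clopen_C_UNIV I(1) _ I(2) I1]
        x(1) by blast
  qed
  then have "G \<subseteq> S"
    using assms S(1) unfolding gen_by_small_support_def generated_homeo_def by blast
  then show ?thesis
    unfolding S_def by blast
qed

lemma pstab_subset_transport_image:
  assumes into: "transport \<phi> J ` G \<subseteq> G"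
  shows "pstab G (UNIV - J) \<subseteq> transport \<phi> J ` G"
proof -
  define R where "R = transport \<phi> J ` G"
  have R: "homeo_subgroup R" "R \<subseteq> G"
    unfolding R_def using homeo_subgroup_transport_image[OF \<phi> subgroup into] into by auto
  have R_I: "\<forall>x\<in>G. supp x \<subseteq> I \<longrightarrow> x \<in> R"
    unfolding R_def using transport_supported_in_I by (metis image_eqI)
  have R_off: "\<forall>x\<in>G. supp x \<subseteq> J - I1 \<longrightarrow> x \<in> R"
  proof (intro ballI impI)
    fix x assume x: "x \<in> G" "supp x \<subseteq> J - I1"
    have bij_g: "bij g" using homeo_subgroup_bij[OF subgroup g] .
    define y where "y = inv g \<circ> x \<circ> inv (inv g)"
    have "y \<in> G"
      unfolding y_def using subgroup g x(1) by (simp add: homeo_subgroup_comp homeo_subgroup_inv)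
    have "supp y \<subseteq> inv g ` (J - I1)"
      unfolding y_def supp_conj[OF bij_imp_bij_inv[OF bij_g]] using x(2) by blast
    also have "\<dots> \<subseteq> UNIV - I1"
      using Diff_I1_subset_image bij_g by (auto simp: bij_is_inj)
    finally have "transport \<phi> J y = g \<circ> y \<circ> inv g"
      using transport_supported_off_I1 \<open>y \<in> G\<close> by blast
    also have "\<dots> = x"
      unfolding y_def
      by (rule ext) (simp add: inv_inv_eq[OF bij_g] surj_f_inv_f[OF bij_is_surj[OF bij_g]])
    finally show "x \<in> R"
      unfolding R_def using \<open>y \<in> G\<close> by (metis image_eqI)
  qed
  have R_gap: "x \<in> R" if "x \<in> G" "clopen_C Z" "Z \<noteq> {}" "Z \<subseteq> J" "supp x \<subseteq> J - Z" for x Z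
    using subgroup_contains_supported_with_gap[OF R R_I R_off J(1) I(1) _ _ I1 that(2-4) that(1,5)]
      J(2) by blast
  show ?thesis
  proof
    fix \<delta> assume "\<delta> \<in> pstab G (UNIV - J)"
    then have "\<delta> \<in> G" "supp \<delta> \<subseteq> J"
      unfolding pstab_Diff_UNIV by auto
    moreover have "J \<noteq> {}"
      using J(2) by blast
    ultimately show "\<delta> \<in> transport \<phi> J ` G"
      using subgroup_contains_supported[OF R(1) J(1) _ J(3)] R_gap unfolding R_def by blast
  qed
qed

lemma transport_image_eq_pstab:
  assumes "gen_by_small_support G"
  shows "transport \<phi> J ` G = pstab G (UNIV - J)"
  using pstab_subset_transport_image[OF transport_into[OF assms]] transport_into[OF assms]
    supp_transport unfolding pstab_Diff_UNIV by blast

end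

context vigorous_homeo_group
begin

lemma exists_splice_embedding:
  assumes I: "I \<in> K_C" and K: "K \<in> K_C" and "I \<subset> K"
  obtains I1 J g \<phi> where "splice_embedding G I I1 J g \<phi>" "J \<subset> K"
proof -
  have I: "clopen_C I" "I \<noteq> {}" "I \<noteq> UNIV" and K: "clopen_C K"
    using I K unfolding K_C_def by auto
  obtain I1 where I1: "clopen_C I1" "I1 \<noteq> {}" "I1 \<subset> I"
    using clopen_C_proper_subset[OF I(1,2)] .
  have "clopen_C (K - I)" "K - I \<noteq> {}"
    using clopen_C_Diff[OF K I(1)] \<open>I \<subset> K\<close> by auto
  then obtain T where T: "clopen_C T" "T \<noteq> {}" "T \<subset> K - I"
    using clopen_C_proper_subset by blast
  have L: "clopen_C (UNIV - I)" "UNIV - I \<noteq> {}"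
    using clopen_C_Diff[OF clopen_C_UNIV I(1)] I(3) by auto
  have "UNIV - I \<subset> I1 \<union> (UNIV - I)" "T \<subset> I1 \<union> (UNIV - I)"
    using I1 T(3) by auto
  then obtain g where g: "g \<in> G" "supp g \<subseteq> I1 \<union> (UNIV - I)" "g ` (UNIV - I) \<subseteq> T"
    using vigorousE[OF clopen_C_Un[OF I1(1) L(1)] L(1) T(1) L(2) _ T(2)] by blast
  define J where "J = I \<union> g ` (UNIV - I)"
  define \<phi> where "\<phi> = (\<lambda>x. if x \<in> I then x else g x)"
  have "g ` (UNIV - I) \<inter> I = {}"
    using g(3) T(3) by blast
  then have "bij_betw \<phi> UNIV J"
    unfolding J_def \<phi>_def using bij_betw_splice homeo_subgroup_bij[OF subgroup g(1)] by blast
  moreover have "clopen_C J"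
    unfolding J_def using clopen_C_Un[OF I(1) Homeo_C_clopen_image[OF _ L(1)]]
      homeo_subgroup_Homeo_C[OF subgroup g(1)] by blast
  moreover have "I \<subset> J"
    unfolding J_def using \<open>g ` (UNIV - I) \<inter> I = {}\<close> L(2) by blast
  moreover have "J \<subset> K"
    unfolding J_def using g(3) T(3) \<open>I \<subset> K\<close> by blast
  moreover have "\<phi> x = g x" if "x \<notin> I1" for x
    using g(2) that unfolding \<phi>_def supp_subset_iff by auto
  ultimately have "splice_embedding G I I1 J g \<phi>" "J \<subset> K"
    using I(1,3) I1 g(1)
    by (auto intro!: splice_embedding.intro splice_embedding_axioms.intro vigorous_homeo_group_axioms
        simp: \<phi>_def)
  then show ?thesis
    using that by blast
qed

end

theorem lemma2p11:
  assumes "homeo_subgroup G" and "vigorous G" and "gen_by_small_support G"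
    and "I \<in> K_C" and "K \<in> K_C" and "I \<subset> K"
  shows "\<exists>J\<in>K_C. I \<subset> J \<and> J \<subset> K \<and>
    (\<exists>f. group_iso_on f G (pstab G (UNIV - J)) \<and>
         (\<forall>g\<in>G. \<forall>p. p \<in> I \<and> g p \<in> I \<longrightarrow> f g p = g p))"
proof -
  interpret vigorous_homeo_group G
    using assms(1,2) by unfold_locales
  obtain I1 J g \<phi> where "splice_embedding G I I1 J g \<phi>" "J \<subset> K"
    using exists_splice_embedding[OF assms(4-6)] .
  then interpret splice_embedding G I I1 J g \<phi>
    by simp
  have "group_iso_on (transport \<phi> J) G (pstab G (UNIV - J))"
    unfolding group_iso_on_def bij_betw_def
    using transport_image_eq_pstab[OF assms(3)] inj_transport[OF \<phi>] transport_comp[OF \<phi>]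
    by (auto intro: inj_on_subset)
  moreover have "J \<in> K_C"
    using J unfolding K_C_def by blast
  ultimately show ?thesis
    using J(2) \<open>J \<subset> K\<close> transport_agrees_on_I by blast
qed

end
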